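(* Let $A \subset \mathbb{Z}$ be a finite set with $\min A = 0$, $\max A = b$, and $\gcd A = 1$. Let $\mathcal{C}_A = \{\sum_{a \in A} n_a (a,1) : n_a \in \mathbb{N}\} \subset \mathbb{Z}^2$, $\Lambda = \{(bn, m+n) : m,n \in \mathbb{Z}\}$, and $\Lambda^+ = \{(bn, m+n) : m,n \in \mathbb{N}\}$. For $a \in \{0,\ldots,b-1\}$ let $\mathcal{S}_a$ be the set of points of $\mathcal{C}_A$ congruent to $(a,1)$ modulo $\Lambda$, and let $(g_a,h_a) \in \mathbb{N}^2$ be the unique point such that $\mathcal{S}_a \subseteq (g_a,h_a) + \Lambda^+$ and $((g_a,h_a) + \Lambda^+) \setminus \mathcal{S}_a$ is finite. Let $T_0(A) = \bigcup_{h \geq 0} hA$. Then \[ T_0(A) = \bigcup_{a=0}^{b-1} \big( g_a + b\cdot\mathbb{N} \big), \] where $b\cdot\mathbb{N} = \{0, b, 2b, \ldots\}$.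
   Context: $\mathbb{N} = \{0,1,2,\ldots\}$; $hA = \{a_1 + \cdots + a_h : a_i \in A\}$ with $0A = \{0\}$. The existence and uniqueness of $(g_a,h_a)$ as described is part of the setting (it is proved in the paper). *)

theory Defs
  imports Main
begin

definition sumset :: "nat \<Rightarrow> int set \<Rightarrow> int set" where
  "sumset h A = {(\<Sum>i<h. f i) | f. \<forall>i<h. f i \<in> A}"

definition coneA :: "int set \<Rightarrow> (int \<times> int) set" where
  "coneA A = {((\<Sum>a\<in>A. int (n a) * a), (\<Sum>a\<in>A. int (n a))) | n :: int \<Rightarrow> nat. True}"

definition Lat :: "int \<Rightarrow> (int \<times> int) set" where
  "Lat b = {(b * n, m + n) | m n :: int. True}"

definition LatPlus :: "int \<Rightarrow> (int \<times> int) set" where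
  "LatPlus b = {(b * int n, int m + int n) | m n :: nat. True}"

definition Sa :: "int set \<Rightarrow> int \<Rightarrow> int \<Rightarrow> (int \<times> int) set" where
  "Sa A b a = {p \<in> coneA A. (fst p - a, snd p - 1) \<in> Lat b}"

definition translate :: "int \<times> int \<Rightarrow> (int \<times> int) set \<Rightarrow> (int \<times> int) set" where
  "translate p X = {(fst p + fst q, snd p + snd q) | q. q \<in> X}"

end

theory Submission
  imports Defs
begin

text \<open>
  For finite \<open>A\<close> the cone \<open>C_A\<close> is exactly the set of points \<open>(x, k)\<close> with \<open>x \<in> kA\<close>,
  so \<open>T_0(A)\<close> is the projection of \<open>C_A\<close> to the first coordinate. A point \<open>(x, k)\<close>
  of the cone lies in \<open>S_a\<close> for \<open>a = x mod b\<close>, hence in \<open>(g_a, h_a) + \<Lambda>\<^sup>+\<close>, which forces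
  \<open>x \<in> g_a + b\<nat>\<close>. Conversely, the vertical ray above \<open>(g_a + b n, h_a + n)\<close> lies in
  \<open>(g_a, h_a) + \<Lambda>\<^sup>+\<close>; being infinite, it meets \<open>S_a \<subseteq> C_A\<close>, so \<open>g_a + b n \<in> T_0(A)\<close>.
\<close>

lemma sumset_0 [simp]: "sumset 0 A = {0}"
  unfolding sumset_def by auto

lemma sumset_Suc: "sumset (Suc k) A = {x + a | x a. x \<in> sumset k A \<and> a \<in> A}"
proof (intro set_eqI iffI)
  fix y assume "y \<in> sumset (Suc k) A"
  then obtain f where "y = (\<Sum>i<Suc k. f i)" "\<forall>i<Suc k. f i \<in> A"
    unfolding sumset_def by blast
  then show "y \<in> {x + a | x a. x \<in> sumset k A \<and> a \<in> A}"
    unfolding sumset_def by fastforce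
next
  fix y assume "y \<in> {x + a | x a. x \<in> sumset k A \<and> a \<in> A}"
  then obtain f a where y: "y = (\<Sum>i<k. f i) + a" and f: "\<forall>i<k. f i \<in> A" and "a \<in> A"
    unfolding sumset_def by blast
  then have "\<forall>i<Suc k. (f(k := a)) i \<in> A"
    by (auto simp: less_Suc_eq)
  moreover have "y = (\<Sum>i<Suc k. (f(k := a)) i)"
    using y by simp
  ultimately show "y \<in> sumset (Suc k) A"
    unfolding sumset_def by blast
qed

lemma sumset_add_mult:
  assumes "x \<in> sumset k A" "a \<in> A"
  shows "x + int c * a \<in> sumset (k + c) A"
proof (induction c)
  case 0
  then show ?case using assms(1) by simp
next
  case (Suc c)
  then have "x + int c * a + a \<in> sumset (Suc (k + c)) A"
    using assms(2) unfolding sumset_Suc by blast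
  then show ?case by (simp add: algebra_simps)
qed

lemma sum_mult_mem_sumset:
  assumes "finite B" "B \<subseteq> A"
  shows "(\<Sum>a\<in>B. int (n a) * a) \<in> sumset (\<Sum>a\<in>B. n a) A"
  using assms
proof (induction B rule: finite_induct)
  case (insert c B)
  then have "(\<Sum>a\<in>B. int (n a) * a) + int (n c) * c \<in> sumset ((\<Sum>a\<in>B. n a) + n c) A"
    by (intro sumset_add_mult) auto
  with insert show ?case by (simp add: add.commute)
qed simp

lemma coneA_add:
  assumes "finite A" "(x, y) \<in> coneA A" "a \<in> A"
  shows "(x + a, y + 1) \<in> coneA A"
proof -
  obtain n where x: "x = (\<Sum>c\<in>A. int (n c) * c)" and y: "y = (\<Sum>c\<in>A. int (n c))"
    using assms(2) unfolding coneA_def by blast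
  define m where "m = n(a := Suc (n a))"
  have "(\<Sum>c\<in>A. int (m c) * c) = (\<Sum>c\<in>A. int (n c) * c + (if c = a then a else 0))"
    by (rule sum.cong) (auto simp: m_def algebra_simps)
  also have "\<dots> = x + a"
    using assms(1,3) x by (simp add: sum.distrib)
  finally have first: "(\<Sum>c\<in>A. int (m c) * c) = x + a" .
  have "(\<Sum>c\<in>A. int (m c)) = (\<Sum>c\<in>A. int (n c) + (if c = a then 1 else 0))"
    by (rule sum.cong) (auto simp: m_def)
  also have "\<dots> = y + 1"
    using assms(1,3) y by (simp add: sum.distrib)
  finally have second: "(\<Sum>c\<in>A. int (m c)) = y + 1" .
  show ?thesis
    unfolding coneA_def by (rule CollectI, rule exI[of _ m]) (simp add: first second)
qed

lemma coneA_eq_sumset_graph: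
  assumes "finite A"
  shows "coneA A = {(x, int k) | x k. x \<in> sumset k A}"
proof (intro set_eqI iffI)
  fix p assume "p \<in> coneA A"
  then obtain n where "p = ((\<Sum>a\<in>A. int (n a) * a), int (\<Sum>a\<in>A. n a))"
    unfolding coneA_def by auto
  with sum_mult_mem_sumset[OF assms order_refl]
  show "p \<in> {(x, int k) | x k. x \<in> sumset k A}" by blast
next
  fix p assume "p \<in> {(x, int k) | x k. x \<in> sumset k A}"
  then obtain x k where p: "p = (x, int k)" and x: "x \<in> sumset k A" by blast
  have "(x, int k) \<in> coneA A" using x
  proof (induction k arbitrary: x)
    case 0
    then show ?case
      unfolding coneA_def by (auto intro!: exI[of _ "\<lambda>_. 0"])
  next
    case (Suc k)
    then obtain y a where "x = y + a" "y \<in> sumset k A" "a \<in> A"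
      unfolding sumset_Suc by blast
    with Suc.IH coneA_add[OF assms] have "(y + a, int k + 1) \<in> coneA A" by blast
    with \<open>x = y + a\<close> show ?case by (simp add: add.commute)
  qed
  with p show "p \<in> coneA A" by simp
qed

lemma mem_Lat_iff: "(u, v) \<in> Lat b \<longleftrightarrow> b dvd u"
proof
  assume "b dvd u"
  then obtain n where "u = b * n" by blast
  then have "u = b * n \<and> v = (v - n) + n" by simp
  then show "(u, v) \<in> Lat b" unfolding Lat_def by blast
qed (auto simp: Lat_def)

lemma mem_translate_LatPlus_iff:
  "(x, y) \<in> translate (g, h) (LatPlus b) \<longleftrightarrow>
     (\<exists>m n :: nat. x = g + b * int n \<and> y = h + int m + int n)"
proof
  assume "(x, y) \<in> translate (g, h) (LatPlus b)"
  then show "\<exists>m n :: nat. x = g + b * int n \<and> y = h + int m + int n"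
    unfolding translate_def LatPlus_def by (force simp: add.assoc)
next
  assume "\<exists>m n :: nat. x = g + b * int n \<and> y = h + int m + int n"
  then obtain m n :: nat where "x = g + b * int n" "y = h + int m + int n" by blast
  then show "(x, y) \<in> translate (g, h) (LatPlus b)"
    unfolding translate_def LatPlus_def
    by (intro CollectI exI[of _ "(b * int n, int m + int n)"]) auto
qed

lemma mem_sumset_in_progression:
  assumes "finite A" "x \<in> sumset k A"
    and "Sa A b (x mod b) \<subseteq> translate (g, h) (LatPlus b)"
  shows "\<exists>n :: nat. x = g + b * int n"
proof -
  have "(x, int k) \<in> coneA A"
    using assms(1,2) by (auto simp: coneA_eq_sumset_graph)
  moreover have "b dvd x - x mod b"
    by (simp add: minus_mod_eq_mult_div)
  ultimately have "(x, int k) \<in> Sa A b (x mod b)"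
    unfolding Sa_def by (simp add: mem_Lat_iff)
  with assms(3) have "(x, int k) \<in> translate (g, h) (LatPlus b)" by blast
  then show ?thesis
    unfolding mem_translate_LatPlus_iff by blast
qed

lemma vertical_ray_meets_cofinite:
  fixes T S :: "('a \<times> int) set"
  assumes "finite (T - S)" and "\<And>k :: nat. (x, y + int k) \<in> T"
  shows "\<exists>k :: nat. (x, y + int k) \<in> S"
proof (rule ccontr)
  assume "\<nexists>k :: nat. (x, y + int k) \<in> S"
  with assms(2) have "range (\<lambda>k :: nat. (x, y + int k)) \<subseteq> T - S" by blast
  moreover have "inj (\<lambda>k :: nat. (x, y + int k))" by (rule injI) simp
  ultimately show False
    using assms(1) by (meson finite_imageD finite_subset infinite_UNIV_nat)
qed

lemma progression_mem_Union_sumset: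
  assumes "finite A" and "finite (translate (g, h) (LatPlus b) - Sa A b a)"
  shows "g + b * int n \<in> (\<Union>k. sumset k A)"
proof -
  have "(g + b * int n, (h + int n) + int m) \<in> translate (g, h) (LatPlus b)" for m
    unfolding mem_translate_LatPlus_iff by (intro exI[of _ m] exI[of _ n]) simp
  from vertical_ray_meets_cofinite[OF assms(2) this]
  obtain m where "(g + b * int n, h + int n + int m) \<in> coneA A"
    unfolding Sa_def by blast
  with assms(1) show ?thesis
    by (auto simp: coneA_eq_sumset_graph)
qed

theorem proposition5p4:
  fixes A :: "int set" and b :: int and g h :: "int \<Rightarrow> int"
  assumes "finite A" and "A \<noteq> {}"
    and "Min A = 0" and "Max A = b" and "Gcd A = 1"
    and "\<forall>a\<in>{0..<b}. g a \<ge> 0 \<and> h a \<ge> 0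
           \<and> Sa A b a \<subseteq> translate (g a, h a) (LatPlus b)
           \<and> finite (translate (g a, h a) (LatPlus b) - Sa A b a)"
  shows "(\<Union>k. sumset k A) = (\<Union>a\<in>{0..<b}. {g a + b * int n | n :: nat. True})"
proof -
  have "b > 0"
  proof (rule ccontr)
    assume "\<not> b > 0"
    have "A \<subseteq> {0}"
    proof
      fix a assume "a \<in> A"
      then have "0 \<le> a" "a \<le> b"
        using Min_le[OF assms(1)] Max_ge[OF assms(1)] assms(3,4) by auto
      with \<open>\<not> b > 0\<close> show "a \<in> {0}" by simp
    qed
    with assms(2) have "A = {0}" by blast
    with assms(5) show False by simp
  qed
  have cover: "Sa A b a \<subseteq> translate (g a, h a) (LatPlus b)"
    and cofinite: "finite (translate (g a, h a) (LatPlus b) - Sa A b a)"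
    if "a \<in> {0..<b}" for a
    using bspec[OF assms(6) that] by simp_all
  show ?thesis
  proof (intro set_eqI iffI)
    fix x assume "x \<in> (\<Union>k. sumset k A)"
    then obtain k where k: "x \<in> sumset k A" by blast
    have a: "x mod b \<in> {0..<b}" using \<open>b > 0\<close> by simp
    obtain n :: nat where "x = g (x mod b) + b * int n"
      using mem_sumset_in_progression[OF assms(1) k cover[OF a]] by blast
    with a show "x \<in> (\<Union>a\<in>{0..<b}. {g a + b * int n | n :: nat. True})" by blast
  next
    fix x assume "x \<in> (\<Union>a\<in>{0..<b}. {g a + b * int n | n :: nat. True})"
    then obtain a n where a: "a \<in> {0..<b}" and x: "x = g a + b * int n" by blast
    show "x \<in> (\<Union>k. sumset k A)"
      unfolding x by (rule progression_mem_Union_sumset[OF assms(1) cofinite[OF a]])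
  qed
qed

end
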